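(* Let $\mu$ be a nonatomic positive Radon measure on $\mathbb{R}$ and let $g\in\Lambda_\mu$ with seminorm $M$. For $a<b$ let $g_{ab}(x)=\frac{b-x}{b-a}g(a)+\frac{x-a}{b-a}g(b)$. Then $\sup_{x\in[a,b]}|g(x)-g_{ab}(x)|\le M\mu([a,b])$ for all $a<b$. Conversely, if a continuous $g$ satisfies $\sup_{[a,b]}|g-g_{ab}|\le M\mu([a,b])$ for all $a<b$, then $g\in\Lambda_\mu$ with seminorm at most $2M$.
   Context: For a nonatomic positive Radon measure $\mu$ on $\mathbb{R}$, $\Lambda_\mu$ is the class of continuous $g\colon\mathbb{R}\to\mathbb{R}$ for which there is $M>0$ with $|g(x+h)-2g(x)+g(x-h)|\le M\mu([x-h,x+h])$ for all $x\in\mathbb{R}$, $h\ge0$; the smallest such $M$ is the seminorm of $g$ in $\Lambda_\mu$. *)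

theory Defs
  imports "HOL-Analysis.Analysis"
begin

text \<open>A nonatomic positive Radon measure on the real line: a Borel measure that is
  finite on compact intervals (locally finite; on \<real> this is equivalent to Radon)
  and gives zero mass to every singleton.\<close>
definition nonatomic_radon :: "real measure \<Rightarrow> bool" where
  "nonatomic_radon mu \<longleftrightarrow> sets mu = sets borel
     \<and> (\<forall>a b. emeasure mu {a..b} < \<infinity>)
     \<and> (\<forall>x. emeasure mu {x} = 0)"

definition lambda_bound :: "real measure \<Rightarrow> (real \<Rightarrow> real) \<Rightarrow> real \<Rightarrow> bool" where
  "lambda_bound mu g M \<longleftrightarrow>
     (\<forall>x h. h \<ge> 0 \<longrightarrow> \<bar>g (x + h) - 2 * g x + g (x - h)\<bar> \<le> M * measure mu {x - h..x + h})"

definition Lambda_mu :: "real measure \<Rightarrow> (real \<Rightarrow> real) set" where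
  "Lambda_mu mu = {g. continuous_on UNIV g \<and> (\<exists>M>0. lambda_bound mu g M)}"

text \<open>Seminorm: the smallest admissible constant (infimum of admissible nonnegative constants;
  it is attained since the condition is closed in M).\<close>
definition lambda_seminorm :: "real measure \<Rightarrow> (real \<Rightarrow> real) \<Rightarrow> real" where
  "lambda_seminorm mu g = Inf {M. M \<ge> 0 \<and> lambda_bound mu g M}"

definition interp :: "(real \<Rightarrow> real) \<Rightarrow> real \<Rightarrow> real \<Rightarrow> real \<Rightarrow> real" where
  "interp g a b x = (b - x) / (b - a) * g a + (x - a) / (b - a) * g b"

end

theory Submission
  imports Defs
begin

(* Write phi = g - interp g a b for the deviation of g from its chord on [a,b].
   Since the chord is affine, phi has the same second differences as g, and phi vanishes
   at a and b.
   (1) If g satisfies the second-difference bound with constant S, let x0 maximise |phi|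
       on [a,b] and let h be the distance from x0 to the nearer endpoint.  Then one of
       phi (x0 + h), phi (x0 - h) is zero and the other is at most |phi x0| in modulus,
       so |phi x0| is bounded by the second difference of g at x0 with step h, hence by
       S * mu [x0-h, x0+h] <= S * mu [a,b].  The seminorm is itself an admissible constant.
   (2) Conversely, at the midpoint of [x-h, x+h] the chord equals the average of the end
       values, so the second difference of g at x is -2 times the deviation there, which
       is at most M * mu [x-h, x+h]; thus 2M is an admissible constant. *)

lemma measure_interval_mono:
  fixes mu :: "real measure"
  assumes sets: "sets mu = sets borel" and fin: "emeasure mu {a..b} < \<infinity>"
    and "a \<le> c" "d \<le> b"
  shows "measure mu {c..d} \<le> measure mu {a..b}"
proof (rule measure_mono_fmeasurable)
  show "{c..d} \<subseteq> {a..b}" using assms by auto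
  show "{c..d} \<in> sets mu" using sets by simp
  show "{a..b} \<in> fmeasurable mu" using sets fin by (simp add: fmeasurable_def)
qed

lemma lambda_bound_mono:
  assumes "lambda_bound mu g M" "M \<le> N"
  shows "lambda_bound mu g N"
  using assms unfolding lambda_bound_def
  by (meson measure_nonneg mult_right_mono order_trans)

lemma lambda_seminorm_admissible:
  assumes "g \<in> Lambda_mu mu"
  shows "lambda_bound mu g (lambda_seminorm mu g)" and "lambda_seminorm mu g \<ge> 0"
proof -
  obtain M where M: "M > 0" "lambda_bound mu g M" using assms unfolding Lambda_mu_def by auto
  let ?S = "{M. M \<ge> 0 \<and> lambda_bound mu g M}"
  have ne: "?S \<noteq> {}" using M by (auto intro!: exI[of _ M])
  show "lambda_seminorm mu g \<ge> 0" unfolding lambda_seminorm_def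
    by (rule cInf_greatest[OF ne]) auto
  show "lambda_bound mu g (lambda_seminorm mu g)"
    unfolding lambda_bound_def
  proof (intro allI impI)
    fix x h :: real assume h: "h \<ge> 0"
    let ?D = "\<bar>g (x + h) - 2 * g x + g (x - h)\<bar>"
    let ?m = "measure mu {x - h..x + h}"
    show "?D \<le> lambda_seminorm mu g * ?m"
    proof (cases "?m = 0")
      case True
      have "?D \<le> M * ?m" using M h unfolding lambda_bound_def by blast
      thus ?thesis using True by simp
    next
      case False
      hence m_pos: "?m > 0" using measure_nonneg[of mu] by (simp add: less_le)
      have "?D / ?m \<le> lambda_seminorm mu g" unfolding lambda_seminorm_def
      proof (rule cInf_greatest[OF ne])
        fix N assume "N \<in> ?S"
        hence "?D \<le> N * ?m" using h unfolding lambda_bound_def by auto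
        thus "?D / ?m \<le> N" using m_pos by (simp add: divide_le_eq)
      qed
      thus ?thesis using m_pos by (simp add: divide_le_eq mult.commute)
    qed
  qed
qed

lemma interp_affine:
  assumes "a < b"
  shows "interp g a b x = g a + (x - a) * ((g b - g a) / (b - a))"
proof -
  have nz: "b - a \<noteq> 0" using assms by simp
  have "interp g a b x = ((b - a) * g a + (x - a) * (g b - g a)) / (b - a)"
    unfolding interp_def by (simp add: add_divide_distrib [symmetric] algebra_simps)
  also have "\<dots> = g a + (x - a) * ((g b - g a) / (b - a))"
    using nz by (simp add: add_divide_distrib)
  finally show ?thesis .
qed

lemma interp_second_difference:
  assumes "a < b"
  shows "interp g a b (x + h) - 2 * interp g a b x + interp g a b (x - h) = 0"
proof -
  define q where "q = (g b - g a) / (b - a)"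
  show ?thesis unfolding interp_affine[OF assms] q_def[symmetric] by (simp add: algebra_simps)
qed

lemma interp_endpoints:
  assumes "a < b"
  shows "interp g a b a = g a" and "interp g a b b = g b"
  using assms unfolding interp_def by simp_all

lemma interp_midpoint:
  assumes "h > 0"
  shows "interp g (x - h) (x + h) x = (g (x - h) + g (x + h)) / 2"
  using assms unfolding interp_def by (simp add: field_simps)

lemma continuous_on_deviation:
  fixes g :: "real \<Rightarrow> real"
  assumes "continuous_on UNIV g"
  shows "continuous_on {a..b} (\<lambda>x. \<bar>g x - interp g a b x\<bar>)"
  unfolding interp_def divide_inverse using assms
  by (intro continuous_intros) (auto intro: continuous_on_subset)

lemma max_bounded_by_second_difference:
  fixes phi :: "real \<Rightarrow> real"
  assumes ends: "phi a = 0" "phi b = 0" and x0: "x0 \<in> {a..b}"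
    and max: "\<forall>y\<in>{a..b}. \<bar>phi y\<bar> \<le> \<bar>phi x0\<bar>"
  defines "h \<equiv> min (x0 - a) (b - x0)"
  shows "\<bar>phi x0\<bar> \<le> \<bar>phi (x0 + h) - 2 * phi x0 + phi (x0 - h)\<bar>"
proof -
  have "x0 + h \<in> {a..b}" "x0 - h \<in> {a..b}" using x0 by (auto simp: h_def)
  hence "\<bar>phi (x0 + h)\<bar> \<le> \<bar>phi x0\<bar>" "\<bar>phi (x0 - h)\<bar> \<le> \<bar>phi x0\<bar>" using max by auto
  moreover have "phi (x0 + h) = 0 \<or> phi (x0 - h) = 0"
    using ends by (auto simp: h_def min_def)
  ultimately show ?thesis by linarith
qed

lemma deviation_bound_from_lambda_bound:
  fixes g :: "real \<Rightarrow> real"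
  assumes mu: "nonatomic_radon mu" and g: "continuous_on UNIV g"
    and S: "lambda_bound mu g S" "S \<ge> 0" and ab: "a < b"
  shows "(SUP x\<in>{a..b}. \<bar>g x - interp g a b x\<bar>) \<le> S * measure mu {a..b}"
proof -
  define phi where "phi y = g y - interp g a b y" for y
  have "\<exists>x0\<in>{a..b}. \<forall>y\<in>{a..b}. \<bar>phi y\<bar> \<le> \<bar>phi x0\<bar>"
    unfolding phi_def using ab
    by (intro continuous_attains_sup continuous_on_deviation[OF g]) auto
  then obtain x0 where x0: "x0 \<in> {a..b}" and max: "\<forall>y\<in>{a..b}. \<bar>phi y\<bar> \<le> \<bar>phi x0\<bar>"
    by blast
  define h where "h = min (x0 - a) (b - x0)"
  have h: "h \<ge> 0" "a \<le> x0 - h" "x0 + h \<le> b" using x0 by (auto simp: h_def)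
  have ends: "phi a = 0" "phi b = 0" using interp_endpoints[OF ab] by (auto simp: phi_def)
  have same_diff: "phi (x0 + h) - 2 * phi x0 + phi (x0 - h) = g (x0 + h) - 2 * g x0 + g (x0 - h)"
    using interp_second_difference[OF ab, of g x0 h] unfolding phi_def by argo
  have "\<bar>phi x0\<bar> \<le> \<bar>g (x0 + h) - 2 * g x0 + g (x0 - h)\<bar>"
    using max_bounded_by_second_difference[OF ends x0 max] same_diff unfolding h_def by simp
  also have "\<dots> \<le> S * measure mu {x0 - h..x0 + h}"
    using S(1) h(1) unfolding lambda_bound_def by blast
  also have "\<dots> \<le> S * measure mu {a..b}"
    using mu h S(2) unfolding nonatomic_radon_def
    by (intro mult_left_mono measure_interval_mono) auto
  finally have "\<bar>phi x0\<bar> \<le> S * measure mu {a..b}" .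
  thus ?thesis
    using ab max unfolding phi_def by (intro cSUP_least) force+
qed

lemma lambda_bound_from_deviation_bound:
  fixes g :: "real \<Rightarrow> real"
  assumes g: "continuous_on UNIV g" and M: "M \<ge> 0"
    and dev: "\<forall>a b. a < b \<longrightarrow> (SUP x\<in>{a..b}. \<bar>g x - interp g a b x\<bar>) \<le> M * measure mu {a..b}"
  shows "lambda_bound mu g (2 * M)"
  unfolding lambda_bound_def
proof (intro allI impI)
  fix x h :: real assume "h \<ge> 0"
  show "\<bar>g (x + h) - 2 * g x + g (x - h)\<bar> \<le> 2 * M * measure mu {x - h..x + h}"
  proof (cases "h = 0")
    case True thus ?thesis using M by simp
  next
    case False
    with \<open>h \<ge> 0\<close> have h: "h > 0" by simp
    have bdd: "bdd_above ((\<lambda>y. \<bar>g y - interp g (x - h) (x + h) y\<bar>) ` {x - h..x + h})"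
      using continuous_on_deviation[OF g]
      by (intro bounded_imp_bdd_above compact_imp_bounded compact_continuous_image) auto
    have "\<bar>g x - interp g (x - h) (x + h) x\<bar>
          \<le> (SUP y\<in>{x - h..x + h}. \<bar>g y - interp g (x - h) (x + h) y\<bar>)"
      using h by (intro cSUP_upper bdd) auto
    also have "\<dots> \<le> M * measure mu {x - h..x + h}" using dev h by auto
    finally have mid_dev: "\<bar>g x - interp g (x - h) (x + h) x\<bar> \<le> M * measure mu {x - h..x + h}" .
    have second_diff:
      "g (x + h) - 2 * g x + g (x - h) = -2 * (g x - interp g (x - h) (x + h) x)"
      using interp_midpoint[OF h, of g x] by simp
    show ?thesis
      using mid_dev unfolding second_diff abs_mult by simp
  qed
qed

theorem mainTheorem12:
  fixes mu :: "real measure"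
  assumes "nonatomic_radon mu"
  shows "(\<forall>g \<in> Lambda_mu mu. \<forall>a b. a < b \<longrightarrow>
            (SUP x\<in>{a..b}. \<bar>g x - interp g a b x\<bar>) \<le> lambda_seminorm mu g * measure mu {a..b})
       \<and> (\<forall>g M. continuous_on UNIV g \<and> M \<ge> 0 \<and>
            (\<forall>a b. a < b \<longrightarrow> (SUP x\<in>{a..b}. \<bar>g x - interp g a b x\<bar>) \<le> M * measure mu {a..b})
            \<longrightarrow> g \<in> Lambda_mu mu \<and> lambda_seminorm mu g \<le> 2 * M)"
proof (intro conjI ballI allI impI)
  fix g and a b :: real assume g: "g \<in> Lambda_mu mu" and "a < b"
  have "continuous_on UNIV g" using g unfolding Lambda_mu_def by auto
  then show "(SUP x\<in>{a..b}. \<bar>g x - interp g a b x\<bar>) \<le> lambda_seminorm mu g * measure mu {a..b}"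
    using deviation_bound_from_lambda_bound[OF assms] lambda_seminorm_admissible[OF g] \<open>a < b\<close>
    by blast
next
  fix g M
  assume A: "continuous_on UNIV g \<and> 0 \<le> M \<and>
            (\<forall>a b. a < b \<longrightarrow> (SUP x\<in>{a..b}. \<bar>g x - interp g a b x\<bar>) \<le> M * measure mu {a..b})"
  then have bound: "lambda_bound mu g (2 * M)"
    using lambda_bound_from_deviation_bound by blast
  \<comment> \<open>membership needs a strictly positive constant, so enlarge 2M by one\<close>
  have "lambda_bound mu g (2 * M + 1)" by (rule lambda_bound_mono[OF bound]) simp
  then show "g \<in> Lambda_mu mu"
    using A unfolding Lambda_mu_def by (auto intro!: exI[of _ "2 * M + 1"])
  show "lambda_seminorm mu g \<le> 2 * M"
    unfolding lambda_seminorm_def using A bound by (intro cInf_lower) auto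
qed

end
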